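(* Let $G$ be a connected graph on $[n+1]$ such that $NC_G$ is graded. Then the max-min edge labeling is an $S_n$ EL-labeling of $NC_G$ if and only if $G$ is perfectly labeled.
   Context: Graphs are finite simple graphs with vertex set $[n+1]$; edges are written $ij$ with $i<j$. $G$ is perfectly labeled if whenever $ik,jk\in E(G)$ with $i<j<k$, also $ij\in E(G)$. A bond of $G$ is a spanning subgraph (identified with its edge set) each of whose connected components is an induced subgraph of $G$; it is noncrossing if there are no two distinct components with vertex sets $B,B'$ and $a,c\in B$, $b,d\in B'$, $a<b<c<d$. $NC_G$ is the poset of noncrossing bonds ordered by inclusion of edge sets. When $G$ is connected and $NC_G$ is graded, each cover $H\lessdot H'$ merges exactly two components (blocks) $B,B'$ of $H$ into one; the max-min edge labeling assigns to it the label $\max\{\min B,\min B'\}-1$. An EL-labeling: every interval has a unique maximal chain with strictly increasing labels, and it lexicographically precedes every other maximal chain of the interval. An $S_n$ EL-labeling is an EL-labeling of a poset of rank $n$ in which the labels along every maximal chain form a permutation of $[n]$ (with the natural order on $[n]$). *)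

theory Defs
  imports Main
begin

text \<open>A graph on the vertex set {1..n+1} is given by its edge set; an edge ij with i<j
  is represented by the pair (i,j).\<close>

definition is_graph :: "nat \<Rightarrow> (nat \<times> nat) set \<Rightarrow> bool" where
  "is_graph n G \<longleftrightarrow> (\<forall>(i,j)\<in>G. 1 \<le> i \<and> i < j \<and> j \<le> n + 1)"

definition conn :: "(nat \<times> nat) set \<Rightarrow> (nat \<times> nat) set" where
  "conn H = (H \<union> H\<inverse>)\<^sup>*"

definition graph_connected :: "nat \<Rightarrow> (nat \<times> nat) set \<Rightarrow> bool" where
  "graph_connected n G \<longleftrightarrow> (\<forall>u\<in>{1..n+1}. \<forall>v\<in>{1..n+1}. (u, v) \<in> conn G)"

definition perfectly_labeled :: "(nat \<times> nat) set \<Rightarrow> bool" where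
  "perfectly_labeled G \<longleftrightarrow>
     (\<forall>i j k. (i,k) \<in> G \<and> (j,k) \<in> G \<and> i < j \<and> j < k \<longrightarrow> (i,j) \<in> G)"

definition blocks :: "nat \<Rightarrow> (nat \<times> nat) set \<Rightarrow> nat set set" where
  "blocks n H = (\<lambda>v. conn H `` {v}) ` {1..n+1}"

text \<open>A bond: a spanning subgraph each of whose components is an induced subgraph of G,
  i.e. every edge of G joining two vertices of the same component of H lies in H.\<close>
definition is_bond :: "nat \<Rightarrow> (nat \<times> nat) set \<Rightarrow> (nat \<times> nat) set \<Rightarrow> bool" where
  "is_bond n G H \<longleftrightarrow> H \<subseteq> G \<and>
     (\<forall>B\<in>blocks n H. \<forall>(i,j)\<in>G. i \<in> B \<and> j \<in> B \<longrightarrow> (i,j) \<in> H)"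

definition noncrossing :: "nat \<Rightarrow> (nat \<times> nat) set \<Rightarrow> bool" where
  "noncrossing n H \<longleftrightarrow>
     \<not> (\<exists>B\<in>blocks n H. \<exists>B'\<in>blocks n H. B \<noteq> B' \<and>
          (\<exists>a b c d. a \<in> B \<and> c \<in> B \<and> b \<in> B' \<and> d \<in> B' \<and> a < b \<and> b < c \<and> c < d))"

text \<open>NC_G, ordered by inclusion of edge sets (the order on sets).\<close>
definition NC :: "nat \<Rightarrow> (nat \<times> nat) set \<Rightarrow> (nat \<times> nat) set set" where
  "NC n G = {H. is_bond n G H \<and> noncrossing n H}"

text \<open>Max-min edge label of a cover H < H': the blocks of H that are not blocks of H'
  are the two merged blocks B, B'; the label is max{min B, min B'} - 1.\<close>
definition maxmin_label :: "nat \<Rightarrow> (nat \<times> nat) set \<Rightarrow> (nat \<times> nat) set \<Rightarrow> nat" where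
  "maxmin_label n H H' = Max (Min ` (blocks n H - blocks n H')) - 1"

definition covers :: "'a::order set \<Rightarrow> 'a \<Rightarrow> 'a \<Rightarrow> bool" where
  "covers P x y \<longleftrightarrow> x \<in> P \<and> y \<in> P \<and> x < y \<and> \<not> (\<exists>z\<in>P. x < z \<and> z < y)"

definition max_chain_interval :: "'a::order set \<Rightarrow> 'a \<Rightarrow> 'a \<Rightarrow> 'a list \<Rightarrow> bool" where
  "max_chain_interval P x y c \<longleftrightarrow>
     c \<noteq> [] \<and> set c \<subseteq> P \<and> successively (covers P) c \<and> hd c = x \<and> last c = y"

definition maximal_chain :: "'a::order set \<Rightarrow> 'a list \<Rightarrow> bool" where
  "maximal_chain P c \<longleftrightarrow>
     c \<noteq> [] \<and> set c \<subseteq> P \<and> successively (covers P) c \<and>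
     \<not> (\<exists>z\<in>P. z < hd c) \<and> \<not> (\<exists>z\<in>P. last c < z)"

definition graded :: "'a::order set \<Rightarrow> bool" where
  "graded P \<longleftrightarrow> finite P \<and>
     (\<forall>c c'. maximal_chain P c \<longrightarrow> maximal_chain P c' \<longrightarrow> length c = length c')"

definition chain_labels :: "('a \<Rightarrow> 'a \<Rightarrow> 'l) \<Rightarrow> 'a list \<Rightarrow> 'l list" where
  "chain_labels lab c = map (\<lambda>(a, b). lab a b) (zip c (tl c))"

definition EL_labeling :: "'a::order set \<Rightarrow> ('a \<Rightarrow> 'a \<Rightarrow> 'l::linorder) \<Rightarrow> bool" where
  "EL_labeling P lab \<longleftrightarrow>
     (\<forall>x\<in>P. \<forall>y\<in>P. x \<le> y \<longrightarrow>
        (\<exists>!c. max_chain_interval P x y c \<and> sorted_wrt (<) (chain_labels lab c)) \<and>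
        (\<forall>c c'. max_chain_interval P x y c \<and> sorted_wrt (<) (chain_labels lab c) \<and>
                max_chain_interval P x y c' \<and> c' \<noteq> c \<longrightarrow>
                ord_class.lexordp (chain_labels lab c) (chain_labels lab c')))"

definition Sn_EL_labeling :: "nat \<Rightarrow> 'a::order set \<Rightarrow> ('a \<Rightarrow> 'a \<Rightarrow> nat) \<Rightarrow> bool" where
  "Sn_EL_labeling n P lab \<longleftrightarrow> EL_labeling P lab \<and>
     (\<forall>c. maximal_chain P c \<longrightarrow>
        length c = n + 1 \<and> distinct (chain_labels lab c) \<and> set (chain_labels lab c) = {1..n})"

end

theory Submission
  imports Defs
begin

text \<open>
  A bond is determined by the partition of \<open>[n+1]\<close> into its blocks, so a cover in \<open>NC_G\<close> merges
  two blocks and its max-min label is the larger of the two block minima, minus one.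

  Let \<open>G\<close> be perfectly labeled and \<open>x < y\<close> in \<open>NC_G\<close>. Let \<open>m\<close> be the least minimum of a block
  of \<open>x\<close> that is not the minimum of a block of \<open>y\<close>, and \<open>r < m\<close> the minimum of the block of \<open>y\<close>
  containing \<open>m\<close>. In a perfectly labeled graph a vertex connected to a smaller vertex has a
  smaller neighbour; the one of \<open>m\<close> in \<open>y\<close> lies in the \<open>x\<close>-block of \<open>r\<close>, so merging the
  \<open>x\<close>-blocks of \<open>r\<close> and \<open>m\<close> gives a bond, which is again noncrossing and is the only cover of
  \<open>x\<close> below \<open>y\<close> with label \<open>m - 1\<close>. Along every maximal chain of \<open>[x, y]\<close> each block
  minimum of \<open>x\<close> that disappears contributes its predecessor as a label exactly once, and \<open>m - 1\<close>
  is the smallest of these. Hence the greedy chain through these covers is the unique increasing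
  chain, it is lexicographically first, and on \<open>[{}, G]\<close> the labels are \<open>{1..n}\<close>.

  If \<open>ik, jk \<in> G\<close> with \<open>i < j < k\<close> but \<open>ij \<notin> G\<close>, both maximal chains from \<open>{}\<close> to \<open>{ik, jk}\<close>
  are labelled \<open>k - 1, j - 1\<close>, so no increasing chain exists.
\<close>

lemma conn_refl [simp]: "(u, u) \<in> conn H"
  by (simp add: conn_def)

lemma conn_sym: "(u, v) \<in> conn H \<Longrightarrow> (v, u) \<in> conn H"
  unfolding conn_def by (metis converse_Un converse_converse rtrancl_converseI sup_commute)

lemma conn_trans: "(u, v) \<in> conn H \<Longrightarrow> (v, w) \<in> conn H \<Longrightarrow> (u, w) \<in> conn H"
  unfolding conn_def by (rule rtrancl_trans)

lemma conn_edge: "(u, v) \<in> H \<Longrightarrow> (u, v) \<in> conn H"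
  unfolding conn_def by auto

lemma conn_edge_rev: "(u, v) \<in> H \<Longrightarrow> (v, u) \<in> conn H"
  using conn_edge conn_sym by blast

lemma conn_mono: "H \<subseteq> H' \<Longrightarrow> conn H \<subseteq> conn H'"
  unfolding conn_def by (rule rtrancl_mono) auto

lemma conn_empty [simp]: "conn {} = Id"
  by (simp add: conn_def)

lemma conn_least:
  assumes "H \<subseteq> R" and "refl R" and "sym R" and "trans R"
  shows "conn H \<subseteq> R"
proof -
  have "H \<union> H\<inverse> \<subseteq> R"
    using assms(1,3) by (auto dest: symD)
  then have "conn H \<subseteq> R\<^sup>*"
    unfolding conn_def by (rule rtrancl_mono)
  also have "R\<^sup>* = R"
    using assms(2,4) by (auto simp: rtrancl_trancl_reflcl refl_on_def)
  finally show ?thesis .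
qed

lemma conn_Image_eq: "(u, v) \<in> conn H \<Longrightarrow> conn H `` {u} = conn H `` {v}"
  using conn_sym conn_trans by blast

lemma graph_edge_less: "is_graph n G \<Longrightarrow> (a, b) \<in> G \<Longrightarrow> a < b"
  unfolding is_graph_def by blast

lemma empty_bond: "is_graph n G \<Longrightarrow> {} = G \<inter> conn {}"
  unfolding is_graph_def by auto

lemma conn_in_range:
  assumes "is_graph n G" and "H \<subseteq> G" and "(u, v) \<in> conn H" and "u \<noteq> v"
  shows "u \<in> {1..n+1}" and "v \<in> {1..n+1}"
proof -
  let ?R = "Id \<union> {1..n+1} \<times> {1..n+1}"
  have "H \<subseteq> ?R"
    using assms(1,2) unfolding is_graph_def by fastforce
  then have "conn H \<subseteq> ?R"
    by (rule conn_least) (auto simp: refl_on_def sym_def trans_def)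
  then show "u \<in> {1..n+1}" and "v \<in> {1..n+1}"
    using assms(3,4) by auto
qed

lemma finite_conn_Image:
  assumes "is_graph n G" and "H \<subseteq> G"
  shows "finite (conn H `` {v})"
proof -
  have "conn H `` {v} \<subseteq> insert v {1..n+1}"
    using conn_in_range[OF assms] by fastforce
  then show ?thesis
    using finite_subset by blast
qed

lemma is_bond_iff:
  assumes "is_graph n G"
  shows "is_bond n G H \<longleftrightarrow> H = G \<inter> conn H"
proof
  assume bond: "is_bond n G H"
  have "G \<inter> conn H \<subseteq> H"
  proof (clarify)
    fix i j assume ij: "(i, j) \<in> G" "(i, j) \<in> conn H"
    then have "conn H `` {i} \<in> blocks n H"
      using assms unfolding is_graph_def blocks_def by auto
    then show "(i, j) \<in> H"
      using bond ij unfolding is_bond_def by fastforce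
  qed
  then show "H = G \<inter> conn H"
    using bond conn_edge unfolding is_bond_def by auto
next
  assume H: "H = G \<inter> conn H"
  have "(i, j) \<in> H" if "(i, j) \<in> G" and "i \<in> conn H `` {v}" and "j \<in> conn H `` {v}" for i j v
    using that conn_sym conn_trans H by blast
  then show "is_bond n G H"
    using H unfolding is_bond_def blocks_def by blast
qed

definition noncrossing_rel :: "(nat \<times> nat) set \<Rightarrow> bool" where
  "noncrossing_rel R \<longleftrightarrow>
     (\<forall>a b c d. a < b \<and> b < c \<and> c < d \<and> (a, c) \<in> R \<and> (b, d) \<in> R \<longrightarrow> (a, b) \<in> R)"

lemma noncrossing_iff:
  assumes "is_graph n G" and "H \<subseteq> G"
  shows "noncrossing n H \<longleftrightarrow> noncrossing_rel (conn H)"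
proof
  assume nc: "noncrossing n H"
  show "noncrossing_rel (conn H)"
    unfolding noncrossing_rel_def
  proof (intro allI impI)
    fix a b c d
    assume crossing: "a < b \<and> b < c \<and> c < d \<and> (a, c) \<in> conn H \<and> (b, d) \<in> conn H"
    show "(a, b) \<in> conn H"
    proof (rule ccontr)
      assume "(a, b) \<notin> conn H"
      then have distinct: "conn H `` {a} \<noteq> conn H `` {b}"
        by (metis Image_singleton_iff conn_refl)
      have "a \<in> {1..n+1}"
        using conn_in_range(1)[OF assms, of a c] crossing by simp
      then have a_block: "conn H `` {a} \<in> blocks n H"
        unfolding blocks_def by (rule imageI)
      have "b \<in> {1..n+1}"
        using conn_in_range(1)[OF assms, of b d] crossing by simp
      then have b_block: "conn H `` {b} \<in> blocks n H"
        unfolding blocks_def by (rule imageI)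
      have "a \<in> conn H `` {a} \<and> c \<in> conn H `` {a} \<and> b \<in> conn H `` {b} \<and> d \<in> conn H `` {b}
          \<and> a < b \<and> b < c \<and> c < d"
        using crossing by simp
      then have "\<exists>a' b' c' d'. a' \<in> conn H `` {a} \<and> c' \<in> conn H `` {a} \<and>
          b' \<in> conn H `` {b} \<and> d' \<in> conn H `` {b} \<and> a' < b' \<and> b' < c' \<and> c' < d'"
        by blast
      then show False
        using nc a_block b_block distinct unfolding noncrossing_def by meson
    qed
  qed
next
  assume nc: "noncrossing_rel (conn H)"
  show "noncrossing n H"
    unfolding noncrossing_def
  proof
    assume "\<exists>B\<in>blocks n H. \<exists>B'\<in>blocks n H. B \<noteq> B' \<and>
      (\<exists>a b c d. a \<in> B \<and> c \<in> B \<and> b \<in> B' \<and> d \<in> B' \<and> a < b \<and> b < c \<and> c < d)"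
    then obtain u v a b c d where distinct: "conn H `` {u} \<noteq> conn H `` {v}"
      and members: "a \<in> conn H `` {u}" "c \<in> conn H `` {u}" "b \<in> conn H `` {v}" "d \<in> conn H `` {v}"
      and order: "a < b" "b < c" "c < d"
      unfolding blocks_def by blast
    have "(a, c) \<in> conn H" and "(b, d) \<in> conn H"
      using members conn_sym conn_trans by blast+
    then have "(a, b) \<in> conn H"
      using nc order unfolding noncrossing_rel_def by blast
    then have "(u, v) \<in> conn H"
      using members conn_sym conn_trans by blast
    then show False
      using distinct conn_Image_eq by blast
  qed
qed

lemma NC_iff:
  assumes "is_graph n G"
  shows "H \<in> NC n G \<longleftrightarrow> H = G \<inter> conn H \<and> noncrossing_rel (conn H)"
  unfolding NC_def using is_bond_iff[OF assms] noncrossing_iff[OF assms] by blast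

lemma noncrossing_rel_single_block: "noncrossing_rel (Id \<union> T \<times> T)"
  unfolding noncrossing_rel_def by auto

lemma empty_in_NC: "is_graph n G \<Longrightarrow> {} \<in> NC n G"
  using empty_bond noncrossing_rel_single_block[of "{}"] by (simp add: NC_iff)

lemma graph_in_NC:
  assumes G: "is_graph n G" and connected: "graph_connected n G"
  shows "G \<in> NC n G"
proof -
  have "G = G \<inter> conn G"
    using conn_edge by auto
  moreover have "noncrossing_rel (conn G)"
    unfolding noncrossing_rel_def
  proof (intro allI impI)
    fix a b c d
    assume crossing: "a < b \<and> b < c \<and> c < d \<and> (a, c) \<in> conn G \<and> (b, d) \<in> conn G"
    have "a \<in> {1..n+1}"
      using conn_in_range(1)[OF G order_refl, of a c] crossing by simp
    moreover have "b \<in> {1..n+1}"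
      using conn_in_range(1)[OF G order_refl, of b d] crossing by simp
    ultimately show "(a, b) \<in> conn G"
      using connected unfolding graph_connected_def by blast
  qed
  ultimately show ?thesis
    using NC_iff[OF G] by blast
qed

definition block_mins :: "nat \<Rightarrow> (nat \<times> nat) set \<Rightarrow> nat set" where
  "block_mins n H = {v \<in> {1..n+1}. \<forall>u. (v, u) \<in> conn H \<longrightarrow> v \<le> u}"

definition block_min :: "(nat \<times> nat) set \<Rightarrow> nat \<Rightarrow> nat" where
  "block_min H v = Min (conn H `` {v})"

lemma block_minsI: "v \<in> {1..n+1} \<Longrightarrow> (\<And>u. (v, u) \<in> conn H \<Longrightarrow> v \<le> u) \<Longrightarrow> v \<in> block_mins n H"
  unfolding block_mins_def by blast

lemma block_mins_range: "u \<in> block_mins n H \<Longrightarrow> u \<in> {1..n+1}"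
  unfolding block_mins_def by blast

lemma block_mins_le: "u \<in> block_mins n H \<Longrightarrow> (u, v) \<in> conn H \<Longrightarrow> u \<le> v"
  unfolding block_mins_def by blast

lemma block_mins_unique:
  "u \<in> block_mins n H \<Longrightarrow> v \<in> block_mins n H \<Longrightarrow> (u, v) \<in> conn H \<Longrightarrow> u = v"
  using block_mins_le conn_sym by (metis antisym)

lemma block_mins_antimono: "conn H \<subseteq> conn H' \<Longrightarrow> block_mins n H' \<subseteq> block_mins n H"
  unfolding block_mins_def by blast

lemma block_mins_empty: "block_mins n {} = {1..n+1}"
  unfolding block_mins_def by auto

lemma block_mins_connected:
  assumes "is_graph n G" and "graph_connected n G"
  shows "block_mins n G = {1}"
proof
  show "block_mins n G \<subseteq> {1}"
  proof
    fix v assume v: "v \<in> block_mins n G"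
    then have "(v, 1) \<in> conn G"
      using assms(2) block_mins_range unfolding graph_connected_def by auto
    then show "v \<in> {1}"
      using v block_mins_le block_mins_range by fastforce
  qed
  have "1 \<le> u" if "(1, u) \<in> conn G" for u
    using that conn_in_range(2)[OF assms(1) order_refl] by (cases "u = 1") auto
  then show "{1} \<subseteq> block_mins n G"
    by (auto intro: block_minsI)
qed

context
  fixes n G H
  assumes graph: "is_graph n G" and sub: "H \<subseteq> G"
begin

lemma block_min_of_min: "u \<in> block_mins n H \<Longrightarrow> block_min H u = u"
  unfolding block_min_def
  by (rule Min_eqI[OF finite_conn_Image[OF graph sub]]) (auto simp: block_mins_le)

lemma block_min:
  assumes "v \<in> {1..n+1}"
  shows "block_min H v \<in> block_mins n H" and "(v, block_min H v) \<in> conn H"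
    and "block_min H v \<le> v"
proof -
  have fin: "finite (conn H `` {v})"
    by (rule finite_conn_Image[OF graph sub])
  have "conn H `` {v} \<noteq> {}"
    using conn_refl by blast
  then have in_block: "block_min H v \<in> conn H `` {v}"
    unfolding block_min_def using Min_in[OF fin] by blast
  then show "(v, block_min H v) \<in> conn H"
    by simp
  show "block_min H v \<le> v"
    unfolding block_min_def using Min_le[OF fin] by simp
  have "block_min H v \<le> u" if "(block_min H v, u) \<in> conn H" for u
    using that in_block conn_trans Min_le[OF fin] unfolding block_min_def by blast
  moreover have "block_min H v \<in> {1..n+1}"
    using in_block assms conn_in_range(2)[OF graph sub] by (cases "block_min H v = v") auto
  ultimately show "block_min H v \<in> block_mins n H"
    by (auto intro: block_minsI)
qed

end

section \<open>Perfectly labeled graphs\<close>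

lemma perfectly_labeled_bond:
  assumes "perfectly_labeled G" and "H = G \<inter> conn H"
  shows "perfectly_labeled H"
  unfolding perfectly_labeled_def
proof (intro allI impI)
  fix i j k assume ijk: "(i, k) \<in> H \<and> (j, k) \<in> H \<and> i < j \<and> j < k"
  then have "(i, j) \<in> G"
    using assms unfolding perfectly_labeled_def by blast
  moreover have "(i, k) \<in> conn H" and "(k, j) \<in> conn H"
    using ijk conn_edge conn_edge_rev by blast+
  then have "(i, j) \<in> conn H"
    by (rule conn_trans)
  ultimately show "(i, j) \<in> H"
    using assms(2) by blast
qed

text \<open>Removing the top level \<open>M\<close> does not disconnect vertices below \<open>M\<close>: every path through
  \<open>M\<close> can be rerouted through one fixed lower neighbour of \<open>M\<close>, since the lower neighbours of
  \<open>M\<close> form a clique.\<close>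

lemma perfectly_labeled_conn_below_step:
  fixes H :: "(nat \<times> nat) set"
  assumes pl: "perfectly_labeled H" and incr: "\<forall>(a, b)\<in>H. a < b"
    and conn: "(u, v) \<in> conn {(a, b)\<in>H. b \<le> M}" and "u < M" and "v < M"
  shows "(u, v) \<in> conn {(a, b)\<in>H. b < M}"
proof -
  let ?L = "{(a, b)\<in>H. b < M}"
  define reroute where "reroute w = (if w = M \<and> (\<exists>t. (t, M) \<in> H) then SOME t. (t, M) \<in> H else w)"
    for w
  let ?R = "{(a, b). (reroute a, reroute b) \<in> conn ?L}"
  have "conn {(a, b)\<in>H. b \<le> M} \<subseteq> ?R"
  proof (rule conn_least)
    show "{(a, b)\<in>H. b \<le> M} \<subseteq> ?R"
    proof clarify
      fix a b assume ab: "(a, b) \<in> H" "b \<le> M"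
      show "(reroute a, reroute b) \<in> conn ?L"
      proof (cases "b = M")
        case False
        then show ?thesis
          using ab incr conn_edge unfolding reroute_def by fastforce
      next
        case True
        define t where "t = (SOME t. (t, M) \<in> H)"
        have t: "(t, M) \<in> H"
          unfolding t_def using ab True by (metis someI)
        then have rerouted: "reroute a = a" "reroute b = t" "a < M" "t < M"
          using ab True incr unfolding reroute_def t_def by auto
        consider "a = t" | "a < t" | "t < a"
          by linarith
        then show ?thesis
        proof cases
          case 1
          then show ?thesis
            using rerouted by simp
        next
          case 2
          then have "(a, t) \<in> H"
            using pl ab t True rerouted unfolding perfectly_labeled_def by blast
          then show ?thesis
            using rerouted conn_edge[of a t ?L] by simp
        next
          case 3
          then have "(t, a) \<in> H"
            using pl ab t True rerouted unfolding perfectly_labeled_def by blast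
          then show ?thesis
            using rerouted conn_edge_rev[of t a ?L] by simp
        qed
      qed
    qed
    show "refl ?R"
      by (simp add: refl_on_def)
    show "sym ?R"
      by (rule symI) (simp add: conn_sym)
    show "trans ?R"
      by (rule transI) (simp, erule (1) conn_trans)
  qed
  then show ?thesis
    using conn assms(4,5) unfolding reroute_def by auto
qed

lemma perfectly_labeled_conn_below:
  fixes H :: "(nat \<times> nat) set"
  assumes pl: "perfectly_labeled H" and incr: "\<forall>(a, b)\<in>H. a < b" and bound: "\<forall>(a, b)\<in>H. b \<le> N"
    and conn: "(u, v) \<in> conn H" and "u \<le> M" and "v \<le> M"
  shows "(u, v) \<in> conn {(a, b)\<in>H. b \<le> M}"
proof -
  have "M \<le> M + N" by simp
  then have "u \<le> M \<and> v \<le> M \<longrightarrow> (u, v) \<in> conn {(a, b)\<in>H. b \<le> M}"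
  proof (induction M rule: inc_induct)
    case base
    have "{(a, b)\<in>H. b \<le> M + N} = H"
      using bound by auto
    then show ?case
      using conn by simp
  next
    case (step k)
    have "{(a, b)\<in>H. b < Suc k} = {(a, b)\<in>H. b \<le> k}"
      by auto
    then show ?case
      using step.IH perfectly_labeled_conn_below_step[OF pl incr, of u v "Suc k"] by auto
  qed
  then show ?thesis
    using assms(5,6) by blast
qed

lemma perfectly_labeled_lower_neighbour:
  fixes H :: "(nat \<times> nat) set"
  assumes pl: "perfectly_labeled H" and incr: "\<forall>(a, b)\<in>H. a < b" and bound: "\<forall>(a, b)\<in>H. b \<le> N"
    and conn: "(u, v) \<in> conn H" and "u < v"
  shows "\<exists>p. (p, v) \<in> H"
proof (rule ccontr)
  assume no_lower: "\<nexists>p. (p, v) \<in> H"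
  let ?L = "{(a, b)\<in>H. b \<le> v}"
  have "conn ?L \<subseteq> {(a, b). (a = v) = (b = v)}"
    by (rule conn_least) (use no_lower incr in \<open>auto simp: refl_on_def sym_def trans_def\<close>)
  moreover have "(u, v) \<in> conn ?L"
    using perfectly_labeled_conn_below[OF pl incr bound conn] \<open>u < v\<close> by simp
  ultimately show False
    using \<open>u < v\<close> by auto
qed

section \<open>Merging two blocks\<close>

definition merge :: "(nat \<times> nat) set \<Rightarrow> (nat \<times> nat) set \<Rightarrow> nat \<Rightarrow> nat \<Rightarrow> (nat \<times> nat) set" where
  "merge G x a b = G \<inter> (conn x \<union> (conn x `` {a, b}) \<times> (conn x `` {a, b}))"

locale block_merge =
  fixes n :: nat and G x :: "(nat \<times> nat) set" and a b :: nat
  assumes graph: "is_graph n G" and bond: "x = G \<inter> conn x"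
    and a_min: "a \<in> block_mins n x" and b_min: "b \<in> block_mins n x" and a_neq_b: "a \<noteq> b"
    and adjacent: "\<exists>p\<in>conn x `` {a}. \<exists>q\<in>conn x `` {b}. (p, q) \<in> G \<or> (q, p) \<in> G"
begin

abbreviation S :: "nat set" where
  "S \<equiv> conn x `` {a, b}"

abbreviation z :: "(nat \<times> nat) set" where
  "z \<equiv> merge G x a b"

lemma subset_graph: "x \<subseteq> G"
  using bond by blast

lemma a_in_S: "a \<in> S" and b_in_S: "b \<in> S"
  using conn_refl by blast+

lemma not_conn_a_b: "(a, b) \<notin> conn x"
  using block_mins_unique[OF a_min b_min] a_neq_b by blast

lemma in_S_iff_conn:
  assumes "(u, v) \<in> conn x"
  shows "u \<in> S \<longleftrightarrow> v \<in> S"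
proof
  assume "u \<in> S"
  then obtain c where "c \<in> {a, b}" and "(c, u) \<in> conn x"
    by blast
  then show "v \<in> S"
    using conn_trans[OF _ assms] by blast
next
  assume "v \<in> S"
  then obtain c where "c \<in> {a, b}" and "(c, v) \<in> conn x"
    by blast
  then show "u \<in> S"
    using conn_trans[OF _ conn_sym[OF assms]] by blast
qed

lemma square_S_subset_conn:
  assumes "conn x \<subseteq> conn w" and "(a, b) \<in> conn w"
  shows "S \<times> S \<subseteq> conn w"
proof (rule subrelI)
  fix u v assume "(u, v) \<in> S \<times> S"
  then have "u \<in> S" and "v \<in> S"
    by blast+
  have "(a, s) \<in> conn w" if "s \<in> S" for s
  proof -
    from that consider "(a, s) \<in> conn x" | "(b, s) \<in> conn x"
      by blast
    then show ?thesis
    proof cases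
      case 1
      then show ?thesis
        using assms(1) by blast
    next
      case 2
      then have "(b, s) \<in> conn w"
        using assms(1) by blast
      then show ?thesis
        using assms(2) conn_trans by blast
    qed
  qed
  then have "(u, a) \<in> conn w" and "(a, v) \<in> conn w"
    using \<open>u \<in> S\<close> \<open>v \<in> S\<close> conn_sym by blast+
  then show "(u, v) \<in> conn w"
    by (rule conn_trans)
qed

lemma subset_merge: "x \<subseteq> z"
  using bond unfolding merge_def by blast

lemma conn_merge: "conn z = conn x \<union> S \<times> S"
proof
  show "conn z \<subseteq> conn x \<union> S \<times> S"
  proof (rule conn_least)
    show "z \<subseteq> conn x \<union> S \<times> S"
      unfolding merge_def by blast
    show "refl (conn x \<union> S \<times> S)"
      by (simp add: refl_on_def)
    show "sym (conn x \<union> S \<times> S)"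
      by (rule symI) (auto simp: conn_sym)
    show "trans (conn x \<union> S \<times> S)"
    proof (rule transI)
      fix u v w
      assume uv: "(u, v) \<in> conn x \<union> S \<times> S" and vw: "(v, w) \<in> conn x \<union> S \<times> S"
      show "(u, w) \<in> conn x \<union> S \<times> S"
      proof (cases "u \<in> S")
        case True
        then have "v \<in> S"
          using uv in_S_iff_conn by blast
        then have "w \<in> S"
          using vw in_S_iff_conn by blast
        then show ?thesis
          using True by blast
      next
        case False
        then have "(u, v) \<in> conn x" and "v \<notin> S"
          using uv in_S_iff_conn by blast+
        then have "(v, w) \<in> conn x"
          using vw by blast
        then show ?thesis
          using \<open>(u, v) \<in> conn x\<close> conn_trans by blast
      qed
    qed
  qed
  have conn_x: "conn x \<subseteq> conn z"
    using conn_mono[OF subset_merge] .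
  obtain p q where p: "(a, p) \<in> conn x" and q: "(b, q) \<in> conn x" and pq: "(p, q) \<in> G \<or> (q, p) \<in> G"
    using adjacent by blast
  have "p \<in> S" and "q \<in> S"
    using p q by blast+
  then have "(p, q) \<in> z \<or> (q, p) \<in> z"
    using pq unfolding merge_def by blast
  then have "(p, q) \<in> conn z"
    using conn_edge conn_edge_rev by blast
  then have "(a, b) \<in> conn z"
    using p q conn_x conn_sym conn_trans by (meson subsetD)
  then show "conn x \<union> S \<times> S \<subseteq> conn z"
    using conn_x square_S_subset_conn by blast
qed

lemma merge_bond: "z = G \<inter> conn z"
  unfolding conn_merge by (simp add: merge_def)

lemma merge_neq: "x \<noteq> z"
proof
  assume "x = z"
  then have "conn x = conn x \<union> S \<times> S"
    using conn_merge by simp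
  then have "(a, b) \<in> conn x"
    using a_in_S b_in_S by (metis UnI2 mem_Sigma_iff)
  then show False
    using not_conn_a_b by blast
qed

lemma merge_minimal:
  assumes w: "w = G \<inter> conn w" and x_w: "x \<subseteq> w" and w_z: "w \<subseteq> z"
  shows "w = x \<or> w = z"
proof (cases "w = x")
  case False
  then obtain c d where cd: "(c, d) \<in> w" "(c, d) \<notin> x"
    using x_w by auto
  then have "(c, d) \<notin> conn x"
    using w bond by blast
  moreover have "(c, d) \<in> conn x \<union> S \<times> S"
    using cd w_z unfolding merge_def by blast
  ultimately have "(a, c) \<in> conn x \<and> (b, d) \<in> conn x \<or> (b, c) \<in> conn x \<and> (a, d) \<in> conn x"
    using conn_sym conn_trans by blast
  moreover have conn_x: "conn x \<subseteq> conn w"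
    using conn_mono[OF x_w] .
  moreover have "(c, d) \<in> conn w"
    using cd conn_edge by blast
  ultimately have "(a, b) \<in> conn w"
    using conn_sym conn_trans by (meson subsetD)
  then have "conn z \<subseteq> conn w"
    unfolding conn_merge using conn_x square_S_subset_conn by blast
  then show ?thesis
    using w w_z merge_bond by blast
qed simp

lemma block_mins_merge: "block_mins n z = block_mins n x - {max a b}"
proof
  show "block_mins n z \<subseteq> block_mins n x - {max a b}"
  proof
    fix v assume v: "v \<in> block_mins n z"
    have "min a b \<in> S" and "max a b \<in> S"
      using a_in_S b_in_S by (auto simp: min_def max_def)
    then have "(max a b, min a b) \<in> conn z"
      unfolding conn_merge by blast
    moreover have "\<not> max a b \<le> min a b"
      using a_neq_b by linarith
    ultimately have "max a b \<notin> block_mins n z"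
      using block_mins_le by blast
    then show "v \<in> block_mins n x - {max a b}"
      using v block_mins_antimono[OF conn_mono[OF subset_merge]] by blast
  qed
  show "block_mins n x - {max a b} \<subseteq> block_mins n z"
  proof
    fix v assume v: "v \<in> block_mins n x - {max a b}"
    show "v \<in> block_mins n z"
    proof (rule block_minsI)
      show "v \<in> {1..n+1}"
        using v block_mins_range by blast
    next
      fix u assume "(v, u) \<in> conn z"
      then consider "(v, u) \<in> conn x" | "v \<in> S" and "u \<in> S"
        using conn_merge by blast
      then show "v \<le> u"
      proof cases
        case 1
        then show ?thesis
          using v block_mins_le by blast
      next
        case 2
        then have "v = a \<or> v = b"
          using v a_min b_min block_mins_unique by blast
        then have "v = min a b"
          using v by (auto simp: min_def max_def)
        moreover have "a \<le> u \<or> b \<le> u"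
          using \<open>u \<in> S\<close> a_min b_min block_mins_le by blast
        ultimately show ?thesis
          by linarith
      qed
    qed
  qed
qed

lemma conn_merge_Image: "conn z `` {t} = (if t \<in> S then S else conn x `` {t})"
  using in_S_iff_conn by (auto simp: conn_merge)

lemma blocks_diff_merge: "blocks n x - blocks n z = {conn x `` {a}, conn x `` {b}}"
proof
  show "blocks n x - blocks n z \<subseteq> {conn x `` {a}, conn x `` {b}}"
  proof
    fix B assume B: "B \<in> blocks n x - blocks n z"
    then obtain t where t: "t \<in> {1..n+1}" "B = conn x `` {t}"
      unfolding blocks_def by blast
    have "t \<in> S"
    proof (rule ccontr)
      assume "t \<notin> S"
      then have "B = conn z `` {t}"
        using t conn_merge_Image by simp
      then show False
        using B t unfolding blocks_def by blast
    qed
    then show "B \<in> {conn x `` {a}, conn x `` {b}}"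
      using t conn_Image_eq by blast
  qed
  have "conn x `` {c} \<notin> blocks n z" if c: "c \<in> {a, b}" for c
  proof
    assume "conn x `` {c} \<in> blocks n z"
    then obtain t where t: "conn x `` {c} = conn z `` {t}"
      unfolding blocks_def by blast
    show False
    proof (cases "t \<in> S")
      case True
      then have "conn x `` {c} = S"
        using t conn_merge_Image by simp
      then have "a \<in> conn x `` {c}" and "b \<in> conn x `` {c}"
        using a_in_S b_in_S by simp_all
      then have "(a, b) \<in> conn x"
        using conn_sym conn_trans by blast
      then show False
        using not_conn_a_b by blast
    next
      case False
      then have "c \<in> conn x `` {t}"
        using t conn_merge_Image by (metis Image_singleton_iff conn_refl)
      then have "(t, c) \<in> conn x"
        by simp
      moreover have "c \<in> S"
        using c a_in_S b_in_S by blast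
      ultimately show False
        using False in_S_iff_conn by blast
    qed
  qed
  moreover have "conn x `` {a} \<in> blocks n x" and "conn x `` {b} \<in> blocks n x"
    using a_min b_min block_mins_range unfolding blocks_def by blast+
  ultimately show "{conn x `` {a}, conn x `` {b}} \<subseteq> blocks n x - blocks n z"
    by blast
qed

lemma maxmin_label_merge: "maxmin_label n x z = max a b - 1"
  using block_min_of_min[OF graph subset_graph a_min] block_min_of_min[OF graph subset_graph b_min]
  unfolding maxmin_label_def blocks_diff_merge block_min_def by (simp add: max_def)

end

section \<open>The cover with the least label\<close>

locale NC_interval =
  fixes n :: nat and G x y :: "(nat \<times> nat) set"
  assumes graph: "is_graph n G" and perfect: "perfectly_labeled G"
    and x_NC: "x \<in> NC n G" and y_NC: "y \<in> NC n G" and x_psubset_y: "x \<subset> y"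
begin

lemma x_bond: "x = G \<inter> conn x" and x_noncrossing: "noncrossing_rel (conn x)"
  using x_NC NC_iff[OF graph] by auto

lemma y_bond: "y = G \<inter> conn y" and y_noncrossing: "noncrossing_rel (conn y)"
  using y_NC NC_iff[OF graph] by auto

lemma x_subset_graph: "x \<subseteq> G" and y_subset_graph: "y \<subseteq> G"
  using x_bond y_bond by blast+

lemma conn_x_subset_y: "conn x \<subseteq> conn y"
  using conn_mono x_psubset_y by blast

text \<open>\<open>least_lost\<close> and \<open>least_lost_root\<close> are the \<open>m\<close> and \<open>r\<close> of the introduction.\<close>

definition lost_mins :: "nat set" where
  "lost_mins = block_mins n x - block_mins n y"

definition least_lost :: nat where
  "least_lost = Min lost_mins"

definition least_lost_root :: nat where
  "least_lost_root = block_min y least_lost"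

definition least_cover :: "(nat \<times> nat) set" where
  "least_cover = merge G x least_lost_root least_lost"

lemma finite_lost_mins: "finite lost_mins"
  unfolding lost_mins_def block_mins_def by auto

lemma lost_mins_nonempty: "lost_mins \<noteq> {}"
proof -
  obtain i j where ij: "(i, j) \<in> y" "(i, j) \<notin> x"
    using x_psubset_y by auto
  then have "(i, j) \<in> G"
    using y_subset_graph by blast
  then have range: "i \<in> {1..n+1}" "j \<in> {1..n+1}" and "(i, j) \<notin> conn x"
    using graph ij x_bond unfolding is_graph_def by auto
  let ?u = "block_min x i" and ?v = "block_min x j"
  have iu: "(i, ?u) \<in> conn x" and jv: "(j, ?v) \<in> conn x"
    using block_min(2)[OF graph x_subset_graph] range by blast+
  have "(?u, i) \<in> conn y" and "(i, ?v) \<in> conn y"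
    using iu jv conn_sym conn_trans conn_edge[OF ij(1)] conn_x_subset_y by blast+
  then have "(?u, ?v) \<in> conn y"
    by (rule conn_trans)
  moreover have "?u \<noteq> ?v"
  proof
    assume "?u = ?v"
    then have "(i, j) \<in> conn x"
      using iu conn_sym[OF jv] by (metis conn_trans)
    then show False
      using \<open>(i, j) \<notin> conn x\<close> by blast
  qed
  ultimately have "?u \<notin> block_mins n y \<or> ?v \<notin> block_mins n y"
    using block_mins_unique by blast
  then show ?thesis
    using block_min[OF graph x_subset_graph range(1)] block_min[OF graph x_subset_graph range(2)]
    unfolding lost_mins_def by blast
qed

lemma least_lost_in_lost_mins: "least_lost \<in> lost_mins"
  unfolding least_lost_def using Min_in[OF finite_lost_mins lost_mins_nonempty] .

lemma least_lost_le: "t \<in> lost_mins \<Longrightarrow> least_lost \<le> t"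
  unfolding least_lost_def using Min_le[OF finite_lost_mins] .

lemma least_lost_x: "least_lost \<in> block_mins n x" and least_lost_y: "least_lost \<notin> block_mins n y"
  using least_lost_in_lost_mins unfolding lost_mins_def by auto

lemma least_lost_range: "least_lost \<in> {1..n+1}"
  using least_lost_x block_mins_range by blast

lemma least_lost_root_y: "least_lost_root \<in> block_mins n y"
  and conn_least_lost_root: "(least_lost, least_lost_root) \<in> conn y"
  and least_lost_root_less: "least_lost_root < least_lost"
proof -
  show "least_lost_root \<in> block_mins n y" and "(least_lost, least_lost_root) \<in> conn y"
    using block_min[OF graph y_subset_graph least_lost_range] unfolding least_lost_root_def by blast+
  then show "least_lost_root < least_lost"
    using block_min(3)[OF graph y_subset_graph least_lost_range] least_lost_y
    unfolding least_lost_root_def by (metis order.not_eq_order_implies_strict)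
qed

lemma least_lost_root_x: "least_lost_root \<in> block_mins n x"
  using least_lost_root_y block_mins_antimono[OF conn_x_subset_y] by blast

lemma two_le_least_lost: "2 \<le> least_lost"
  using least_lost_root_less least_lost_root_x block_mins_range by fastforce

lemma block_min_below_least_lost:
  assumes "u \<in> block_mins n x" and "(u, least_lost) \<in> conn y" and "u < least_lost"
  shows "u = least_lost_root"
proof -
  have "u \<notin> lost_mins"
    using least_lost_le assms(3) by fastforce
  then have "u \<in> block_mins n y"
    using assms(1) unfolding lost_mins_def by blast
  moreover have "(u, least_lost_root) \<in> conn y"
    using assms(2) conn_least_lost_root conn_trans by blast
  ultimately show ?thesis
    using block_mins_unique least_lost_root_y by blast
qed

text \<open>Perfect labeling enters here: \<open>least_lost\<close> has a lower neighbour in \<open>y\<close>, and the minimum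
  of the \<open>x\<close>-block of that neighbour is below \<open>least_lost\<close>, so it can only be \<open>least_lost_root\<close>.\<close>

lemma least_lost_adjacent: "\<exists>p\<in>conn x `` {least_lost_root}. (p, least_lost) \<in> G"
proof -
  have "\<forall>(a, b)\<in>y. a < b \<and> b \<le> n + 1"
    using graph y_subset_graph unfolding is_graph_def by fastforce
  then obtain p where p: "(p, least_lost) \<in> y"
    using perfectly_labeled_lower_neighbour[OF perfectly_labeled_bond[OF perfect y_bond]]
      conn_sym[OF conn_least_lost_root] least_lost_root_less by fastforce
  then have "(p, least_lost) \<in> G"
    using y_subset_graph by blast
  then have range: "p \<in> {1..n+1}" and "p < least_lost"
    using graph unfolding is_graph_def by auto
  let ?u = "block_min x p"
  have u: "?u \<in> block_mins n x" "(p, ?u) \<in> conn x" "?u \<le> p"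
    using block_min[OF graph x_subset_graph range] by blast+
  have "(?u, p) \<in> conn y"
    using u(2) conn_sym conn_x_subset_y by blast
  then have "(?u, least_lost) \<in> conn y"
    using conn_edge[OF p] conn_trans by blast
  then have "?u = least_lost_root"
    using block_min_below_least_lost u(1,3) \<open>p < least_lost\<close> by simp
  then have "(least_lost_root, p) \<in> conn x"
    using conn_sym[OF u(2)] by simp
  then show ?thesis
    using \<open>(p, least_lost) \<in> G\<close> by blast
qed

sublocale merge: block_merge n G x least_lost_root least_lost
proof
  show "\<exists>p\<in>conn x `` {least_lost_root}. \<exists>q\<in>conn x `` {least_lost}. (p, q) \<in> G \<or> (q, p) \<in> G"
    using least_lost_adjacent conn_refl by blast
qed (use graph x_bond least_lost_root_x least_lost_x least_lost_root_less in auto)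

abbreviation S :: "nat set" where
  "S \<equiv> conn x `` {least_lost_root, least_lost}"

lemma conn_S_least_lost: "u \<in> S \<Longrightarrow> (u, least_lost) \<in> conn y"
proof -
  assume "u \<in> S"
  then consider "(least_lost_root, u) \<in> conn x" | "(least_lost, u) \<in> conn x"
    by blast
  then show ?thesis
  proof cases
    case 1
    then have "(u, least_lost_root) \<in> conn y"
      using conn_x_subset_y conn_sym by blast
    then show ?thesis
      using conn_least_lost_root conn_sym conn_trans by blast
  next
    case 2
    then show ?thesis
      using conn_x_subset_y conn_sym by blast
  qed
qed

lemma conn_least_cover: "conn least_cover = conn x \<union> S \<times> S"
  unfolding least_cover_def by (rule merge.conn_merge)

lemma conn_least_cover_subset: "conn least_cover \<subseteq> conn y"
  unfolding conn_least_cover using conn_x_subset_y conn_S_least_lost conn_sym conn_trans by blast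

lemma least_cover_subset: "least_cover \<subseteq> y"
  using merge.merge_bond conn_least_cover_subset y_bond unfolding least_cover_def by blast

lemma least_lost_less:
  assumes "(u, t) \<in> conn y" and "u \<in> S" and "t \<notin> S"
  shows "least_lost < t"
proof -
  have conn_t: "(least_lost, t) \<in> conn y"
    using assms(1,2) conn_S_least_lost conn_sym conn_trans by blast
  have "t \<noteq> least_lost"
    using assms(3) merge.b_in_S by blast
  then have range: "t \<in> {1..n+1}"
    using conn_in_range(2)[OF graph y_subset_graph conn_t] by blast
  let ?u = "block_min x t"
  have u: "?u \<in> block_mins n x" "(t, ?u) \<in> conn x" "?u \<le> t"
    using block_min[OF graph x_subset_graph range] by blast+
  have "?u \<notin> S"
    using u(2) assms(3) merge.in_S_iff_conn by blast
  then have "?u \<noteq> least_lost_root" and "?u \<noteq> least_lost"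
    using merge.a_in_S merge.b_in_S by metis+
  moreover have "(?u, least_lost) \<in> conn y"
    using u(2) conn_t conn_x_subset_y conn_sym conn_trans by blast
  ultimately have "\<not> ?u < least_lost"
    using block_min_below_least_lost u(1) by blast
  then show ?thesis
    using u(3) \<open>?u \<noteq> least_lost\<close> by linarith
qed

lemma noncrossing_least_cover: "noncrossing_rel (conn least_cover)"
  unfolding noncrossing_rel_def
proof (intro allI impI)
  fix a b c d
  assume crossing: "a < b \<and> b < c \<and> c < d \<and> (a, c) \<in> conn least_cover \<and> (b, d) \<in> conn least_cover"
  then have "(a, b) \<in> conn y"
    using y_noncrossing conn_least_cover_subset unfolding noncrossing_rel_def by blast
  show "(a, b) \<in> conn least_cover"
  proof (rule ccontr)
    assume "(a, b) \<notin> conn least_cover"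
    then have not_ab: "(a, b) \<notin> conn x" "\<not> (a \<in> S \<and> b \<in> S)"
      unfolding conn_least_cover by blast+
    then have "(a, c) \<notin> conn x \<or> (b, d) \<notin> conn x"
      using x_noncrossing crossing unfolding noncrossing_rel_def by blast
    then consider "a \<in> S" "c \<in> S" "b \<notin> S" "(b, d) \<in> conn x"
      | "b \<in> S" "d \<in> S" "a \<notin> S" "(a, c) \<in> conn x"
      using crossing not_ab(2) unfolding conn_least_cover by blast
    then show False
    proof cases
      case 1
      then have "least_lost < b"
        using least_lost_less \<open>(a, b) \<in> conn y\<close> by blast
      obtain e where e: "e \<in> {least_lost_root, least_lost}" "(e, c) \<in> conn x"
        using \<open>c \<in> S\<close> by blast
      then have "e < b" and "(e, b) \<notin> conn x"
        using \<open>least_lost < b\<close> least_lost_root_less \<open>b \<notin> S\<close> by auto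
      then show False
        using x_noncrossing e(2) 1(4) crossing unfolding noncrossing_rel_def by blast
    next
      case 2
      then have "least_lost < a"
        using least_lost_less conn_sym[OF \<open>(a, b) \<in> conn y\<close>] by blast
      obtain e where e: "e \<in> {least_lost_root, least_lost}" "(e, b) \<in> conn x"
        using \<open>b \<in> S\<close> by blast
      then have "e < a" and "(e, a) \<notin> conn x"
        using \<open>least_lost < a\<close> least_lost_root_less \<open>a \<notin> S\<close> by auto
      then show False
        using x_noncrossing e(2) 2(4) crossing unfolding noncrossing_rel_def by blast
    qed
  qed
qed

lemma least_cover_NC: "least_cover \<in> NC n G"
  using NC_iff[OF graph] merge.merge_bond noncrossing_least_cover unfolding least_cover_def by blast

lemma covers_least_cover: "covers (NC n G) x least_cover"
  unfolding covers_def
proof (intro conjI)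
  show "x \<in> NC n G" and "least_cover \<in> NC n G"
    by (fact x_NC, fact least_cover_NC)
  show "x < least_cover"
    using merge.subset_merge merge.merge_neq unfolding least_cover_def by blast
  show "\<not> (\<exists>w\<in>NC n G. x < w \<and> w < least_cover)"
    using merge.merge_minimal NC_iff[OF graph] unfolding least_cover_def by blast
qed

lemma block_mins_least_cover: "block_mins n least_cover = block_mins n x - {least_lost}"
  using merge.block_mins_merge least_lost_root_less unfolding least_cover_def by (simp add: max_def)

lemma maxmin_label_least_cover: "maxmin_label n x least_cover = least_lost - 1"
  using merge.maxmin_label_merge least_lost_root_less unfolding least_cover_def by (simp add: max_def)

end

lemma max_chain_interval_singleton: "max_chain_interval P x y [a] \<longleftrightarrow> a = x \<and> a = y \<and> a \<in> P"
  unfolding max_chain_interval_def by auto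

lemma max_chain_interval_Cons_Cons:
  "max_chain_interval P x y (a # b # c) \<longleftrightarrow>
     a = x \<and> covers P a b \<and> max_chain_interval P b y (b # c)"
  unfolding max_chain_interval_def covers_def by auto

lemma chain_labels_singleton [simp]: "chain_labels lab [a] = []"
  unfolding chain_labels_def by simp

lemma chain_labels_Cons_Cons [simp]:
  "chain_labels lab (a # b # c) = lab a b # chain_labels lab (b # c)"
  unfolding chain_labels_def by simp

lemma length_chain_labels: "length (chain_labels lab c) = length c - 1"
  unfolding chain_labels_def by simp

lemma max_chain_interval_ends_in: "max_chain_interval P x y c \<Longrightarrow> x \<in> P \<and> y \<in> P"
  unfolding max_chain_interval_def by (metis hd_in_set last_in_set subsetD)

lemma max_chain_interval_le:
  fixes x y :: "'a::order"
  shows "max_chain_interval P x y c \<Longrightarrow> x \<le> y"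
proof (induction c arbitrary: x rule: induct_list012)
  case 1
  then show ?case
    by (simp add: max_chain_interval_def)
next
  case (2 a)
  then show ?case
    by (auto simp: max_chain_interval_singleton)
next
  case (3 a b c)
  then have "x < b" and "b \<le> y"
    by (auto simp: max_chain_interval_Cons_Cons covers_def)
  then show ?case
    by simp
qed

lemma max_chain_interval_Cons_Cons_less:
  fixes x y :: "'a::order"
  assumes "max_chain_interval P x y (a # b # c)"
  shows "x < y"
proof -
  have "x < b" and "b \<le> y"
    using assms max_chain_interval_le[of P b y "b # c"]
    by (auto simp: max_chain_interval_Cons_Cons covers_def)
  then show ?thesis
    by simp
qed

lemma max_chain_interval_same_ends:
  fixes x :: "'a::order"
  assumes "max_chain_interval P x x c"
  shows "c = [x]"
proof (cases c rule: remdups_adj.cases)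
  case 1
  then show ?thesis
    using assms by (simp add: max_chain_interval_def)
next
  case (2 a)
  then show ?thesis
    using assms by (simp add: max_chain_interval_singleton)
next
  case (3 a b c')
  then show ?thesis
    using assms max_chain_interval_Cons_Cons_less by blast
qed

lemma max_chain_interval_distinct_ends:
  assumes "max_chain_interval P x y c" and "x \<noteq> y"
  obtains b c' where "c = x # b # c'" and "covers P x b" and "max_chain_interval P b y (b # c')"
proof (cases c rule: remdups_adj.cases)
  case 1
  then show ?thesis
    using assms by (simp add: max_chain_interval_def)
next
  case (2 a)
  then show ?thesis
    using assms by (auto simp: max_chain_interval_singleton)
next
  case (3 a b c')
  then show ?thesis
    using assms that by (auto simp: max_chain_interval_Cons_Cons)
qed

lemma maximal_chain_bounded:
  fixes bot top :: "'a::order"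
  assumes chain: "maximal_chain P c" and "bot \<in> P" and "top \<in> P" and "\<forall>p\<in>P. bot \<le> p \<and> p \<le> top"
  shows "max_chain_interval P bot top c"
proof -
  have "hd c \<in> P" and "last c \<in> P"
    using chain unfolding maximal_chain_def by auto
  then have "bot \<le> hd c" and "last c \<le> top"
    using assms(4) by blast+
  then have "hd c = bot" and "last c = top"
    using chain assms(2,3) unfolding maximal_chain_def by (auto simp: order.order_iff_strict)
  then show ?thesis
    using chain unfolding maximal_chain_def max_chain_interval_def by blast
qed

lemma sorted_lexordp_same_set:
  fixes xs ys :: "'a::linorder list"
  assumes "sorted_wrt (<) xs" and "distinct ys" and "set xs = set ys" and "xs \<noteq> ys"
  shows "ord_class.lexordp xs ys"
  using assms
proof (induction xs arbitrary: ys)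
  case Nil
  then show ?case
    by simp
next
  case (Cons a xs)
  obtain b ys' where ys: "ys = b # ys'"
    using Cons.prems(3) by (cases ys) auto
  have "b \<in> set (a # xs)"
    using Cons.prems(3) ys by simp
  then have "a \<le> b"
    using Cons.prems(1) by auto
  show ?case
  proof (cases "a = b")
    case True
    then have "set xs = set ys'"
      using Cons.prems ys by auto
    then have "ord_class.lexordp xs ys'"
      using Cons.IH Cons.prems ys True by simp
    then show ?thesis
      using ys True by simp
  next
    case False
    then have "a < b"
      using \<open>a \<le> b\<close> by simp
    then show ?thesis
      using ys by simp
  qed
qed

section \<open>The max-min labeling of a perfectly labeled graph\<close>

locale perfectly_labeled_graph =
  fixes n :: nat and G :: "(nat \<times> nat) set"
  assumes graph: "is_graph n G" and perfect: "perfectly_labeled G"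
begin

abbreviation labels :: "(nat \<times> nat) set list \<Rightarrow> nat list" where
  "labels c \<equiv> chain_labels (maxmin_label n) c"

lemma NC_intervalI: "x \<in> NC n G \<Longrightarrow> y \<in> NC n G \<Longrightarrow> x \<subset> y \<Longrightarrow> NC_interval n G x y"
  using graph perfect by unfold_locales

lemma NC_interval_cover: "covers (NC n G) x w \<Longrightarrow> NC_interval n G x w"
  unfolding covers_def by (blast intro: NC_intervalI)

lemma cover_eq_least_cover:
  assumes cover: "covers (NC n G) x w"
  shows "w = NC_interval.least_cover n G x w"
proof -
  interpret NC_interval n G x w
    using NC_interval_cover[OF cover] .
  have "x < least_cover"
    using covers_least_cover unfolding covers_def by blast
  then show ?thesis
    using cover least_cover_subset least_cover_NC unfolding covers_def by blast
qed

lemma cover_removes_block_min: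
  assumes cover: "covers (NC n G) x w"
  obtains m where "m \<in> block_mins n x" and "2 \<le> m" and "block_mins n w = block_mins n x - {m}"
    and "maxmin_label n x w = m - 1"
proof -
  interpret NC_interval n G x w
    using NC_interval_cover[OF cover] .
  show thesis
    using that least_lost_x two_le_least_lost block_mins_least_cover maxmin_label_least_cover
      cover_eq_least_cover[OF cover] by simp
qed

lemma max_chain_interval_labels:
  "max_chain_interval (NC n G) x y c \<Longrightarrow>
     block_mins n y \<subseteq> block_mins n x \<and> distinct (labels c) \<and>
     set (labels c) = (\<lambda>t. t - 1) ` (block_mins n x - block_mins n y)"
proof (induction c arbitrary: x rule: induct_list012)
  case 1
  then show ?case
    by (simp add: max_chain_interval_def)
next
  case (2 a)
  then show ?case
    by (auto simp: max_chain_interval_singleton)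
next
  case (3 a b c)
  have cover: "covers (NC n G) x b" and chain: "max_chain_interval (NC n G) b y (b # c)"
    using "3.prems" by (auto simp: max_chain_interval_Cons_Cons)
  note IH = "3.IH"(2)[OF chain]
  obtain m where m: "m \<in> block_mins n x" "2 \<le> m" "block_mins n b = block_mins n x - {m}"
    and label: "maxmin_label n x b = m - 1"
    using cover_removes_block_min[OF cover] .
  have "m - 1 \<notin> set (labels (b # c))"
  proof
    assume "m - 1 \<in> set (labels (b # c))"
    then obtain t where "t \<in> block_mins n b" and "m - 1 = t - 1"
      using IH by auto
    moreover have "1 \<le> t"
      using \<open>t \<in> block_mins n b\<close> block_mins_range by fastforce
    ultimately have "t = m"
      using m(2) by arith
    then show False
      using \<open>t \<in> block_mins n b\<close> m(3) by blast
  qed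
  moreover have "set (labels (x # b # c)) = (\<lambda>t. t - 1) ` (block_mins n x - block_mins n y)"
    using IH m label by auto
  ultimately show ?case
    using IH m "3.prems" label by (auto simp: max_chain_interval_Cons_Cons)
qed

lemma increasing_chain_exists:
  assumes "x \<in> NC n G" and "y \<in> NC n G" and "x \<subseteq> y"
  shows "\<exists>c. max_chain_interval (NC n G) x y c \<and> sorted_wrt (<) (labels c)"
  using assms
proof (induction "card (block_mins n x - block_mins n y)" arbitrary: x rule: less_induct)
  case less
  show ?case
  proof (cases "x = y")
    case True
    then have "max_chain_interval (NC n G) x y [x]"
      using less.prems by (simp add: max_chain_interval_singleton)
    then show ?thesis
      by fastforce
  next
    case False
    interpret NC_interval n G x y
      using NC_intervalI less.prems False by blast
    have lost: "block_mins n least_cover - block_mins n y = lost_mins - {least_lost}"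
      using block_mins_least_cover unfolding lost_mins_def by auto
    then have "card (block_mins n least_cover - block_mins n y) < card (block_mins n x - block_mins n y)"
      using card_Diff1_less[OF finite_lost_mins least_lost_in_lost_mins] unfolding lost_mins_def by simp
    then obtain c where chain: "max_chain_interval (NC n G) least_cover y c"
      and sorted: "sorted_wrt (<) (labels c)"
      using less.hyps least_cover_NC less.prems(2) least_cover_subset by blast
    then obtain c' where c: "c = least_cover # c'"
      unfolding max_chain_interval_def by (metis list.collapse)
    have "max_chain_interval (NC n G) x y (x # c)"
      using covers_least_cover chain c by (simp add: max_chain_interval_Cons_Cons)
    moreover have "least_lost - 1 < l" if l: "l \<in> set (labels c)" for l
    proof -
      obtain t where "t \<in> lost_mins" "t \<noteq> least_lost" "l = t - 1"
        using l lost max_chain_interval_labels[OF chain] by auto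
      then show ?thesis
        using least_lost_le two_le_least_lost by fastforce
    qed
    then have "sorted_wrt (<) (labels (x # c))"
      using sorted c maxmin_label_least_cover by simp
    ultimately show ?thesis
      by blast
  qed
qed

lemma increasing_chain_first_label:
  assumes chain: "max_chain_interval (NC n G) x y (x # b # c)"
    and sorted: "sorted_wrt (<) (labels (x # b # c))"
  shows "maxmin_label n x b = NC_interval.least_lost n x y - 1"
proof -
  interpret NC_interval n G x y
    using NC_intervalI max_chain_interval_ends_in[OF chain]
      max_chain_interval_Cons_Cons_less[OF chain] by blast
  have labels: "set (labels (x # b # c)) = (\<lambda>t. t - 1) ` lost_mins"
    using max_chain_interval_labels[OF chain] unfolding lost_mins_def by blast
  then obtain t where "t \<in> lost_mins" and t: "maxmin_label n x b = t - 1"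
    by (metis chain_labels_Cons_Cons image_iff list.set_intros(1))
  then have "least_lost - 1 \<le> maxmin_label n x b"
    using least_lost_le by fastforce
  moreover have "least_lost - 1 \<in> set (labels (x # b # c))"
    using labels least_lost_in_lost_mins by blast
  then have "maxmin_label n x b \<le> least_lost - 1"
    using sorted by (auto simp: less_imp_le)
  ultimately show ?thesis
    by simp
qed

lemma least_label_cover_unique:
  assumes interval: "NC_interval n G x y" and cover: "covers (NC n G) x w" and "w \<subseteq> y"
    and label: "maxmin_label n x w = NC_interval.least_lost n x y - 1"
  shows "w = NC_interval.least_cover n G x y"
proof -
  interpret xy: NC_interval n G x y
    by (rule interval)
  interpret xw: NC_interval n G x w
    using NC_interval_cover[OF cover] .
  have w: "w = xw.least_cover"
    using cover_eq_least_cover[OF cover] by simp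
  then have "xw.least_lost - 1 = xy.least_lost - 1"
    using label xw.maxmin_label_least_cover by simp
  then have same_lost: "xw.least_lost = xy.least_lost"
    using xw.two_le_least_lost xy.two_le_least_lost by simp
  have "(xw.least_lost_root, xy.least_lost) \<in> conn y"
    using conn_mono[OF \<open>w \<subseteq> y\<close>] xw.conn_least_lost_root conn_sym same_lost by auto
  then have "xw.least_lost_root = xy.least_lost_root"
    using xy.block_min_below_least_lost xw.least_lost_root_x xw.least_lost_root_less same_lost by simp
  then show ?thesis
    using w same_lost unfolding xw.least_cover_def xy.least_cover_def by simp
qed

lemma increasing_chain_unique:
  "max_chain_interval (NC n G) x y c \<Longrightarrow> max_chain_interval (NC n G) x y c' \<Longrightarrow>
     sorted_wrt (<) (labels c) \<Longrightarrow> sorted_wrt (<) (labels c') \<Longrightarrow> c = c'"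
proof (induction c arbitrary: x c' rule: induct_list012)
  case 1
  then show ?case
    by (simp add: max_chain_interval_def)
next
  case (2 a)
  then show ?case
    using max_chain_interval_same_ends by (auto simp: max_chain_interval_singleton)
next
  case (3 a b c)
  have a: "a = x" and cover: "covers (NC n G) x b" and tail: "max_chain_interval (NC n G) b y (b # c)"
    using "3.prems"(1) by (auto simp: max_chain_interval_Cons_Cons)
  then have chain: "max_chain_interval (NC n G) x y (x # b # c)"
    using "3.prems"(1) by simp
  then have "x < y"
    by (rule max_chain_interval_Cons_Cons_less)
  then obtain b' c'' where c': "c' = x # b' # c''" and cover': "covers (NC n G) x b'"
    and tail': "max_chain_interval (NC n G) b' y (b' # c'')"
    using max_chain_interval_distinct_ends[OF "3.prems"(2)] by blast
  have interval: "NC_interval n G x y"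
    using NC_intervalI max_chain_interval_ends_in[OF chain] \<open>x < y\<close> by blast
  have "sorted_wrt (<) (labels (x # b # c))"
    using "3.prems"(3) a by simp
  then have "maxmin_label n x b = NC_interval.least_lost n x y - 1"
    by (rule increasing_chain_first_label[OF chain])
  then have "b = NC_interval.least_cover n G x y"
    by (rule least_label_cover_unique[OF interval cover max_chain_interval_le[OF tail]])
  moreover have "max_chain_interval (NC n G) x y (x # b' # c'')"
    using "3.prems"(2) c' by simp
  then have "maxmin_label n x b' = NC_interval.least_lost n x y - 1"
    using increasing_chain_first_label "3.prems"(4) c' by blast
  then have "b' = NC_interval.least_cover n G x y"
    by (rule least_label_cover_unique[OF interval cover' max_chain_interval_le[OF tail']])
  ultimately have "b # c = b' # c''"
    using "3.IH"(2)[OF tail] tail' "3.prems"(3,4) c' by simp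
  then show ?case
    using a c' by simp
qed

lemma EL_labeling_maxmin: "EL_labeling (NC n G) (maxmin_label n)"
  unfolding EL_labeling_def
proof (intro ballI impI conjI allI)
  fix x y assume "x \<in> NC n G" and "y \<in> NC n G" and "x \<le> y"
  then show "\<exists>!c. max_chain_interval (NC n G) x y c \<and> sorted_wrt (<) (labels c)"
    using increasing_chain_exists increasing_chain_unique by blast
  fix c c'
  assume "max_chain_interval (NC n G) x y c \<and> sorted_wrt (<) (labels c) \<and>
    max_chain_interval (NC n G) x y c' \<and> c' \<noteq> c"
  then have chain: "max_chain_interval (NC n G) x y c" and sorted: "sorted_wrt (<) (labels c)"
    and chain': "max_chain_interval (NC n G) x y c'" and "c' \<noteq> c"
    by blast+
  have "set (labels c) = set (labels c')" and "distinct (labels c')"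
    using max_chain_interval_labels[OF chain] max_chain_interval_labels[OF chain'] by simp_all
  moreover have "labels c \<noteq> labels c'"
    using increasing_chain_unique[OF chain chain' sorted] sorted \<open>c' \<noteq> c\<close> by metis
  ultimately show "ord_class.lexordp (labels c) (labels c')"
    using sorted_lexordp_same_set sorted by blast
qed

lemma Sn_EL_labeling_maxmin:
  assumes connected: "graph_connected n G"
  shows "Sn_EL_labeling n (NC n G) (maxmin_label n)"
  unfolding Sn_EL_labeling_def
proof (intro conjI allI impI)
  show "EL_labeling (NC n G) (maxmin_label n)"
    by (rule EL_labeling_maxmin)
  fix c assume "maximal_chain (NC n G) c"
  moreover have "\<forall>w\<in>NC n G. {} \<subseteq> w \<and> w \<subseteq> G"
    using NC_iff[OF graph] by blast
  ultimately have chain: "max_chain_interval (NC n G) {} G c"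
    using maximal_chain_bounded empty_in_NC[OF graph] graph_in_NC[OF graph connected] by blast
  have shift: "{1..n+1} - {1} = Suc ` {1..n}"
    by (auto simp: image_Suc_atLeastAtMost)
  have "(\<lambda>t. t - 1) ` ({1..n+1} - {1}) = {1..n}"
    unfolding shift image_image by simp
  then show labels: "set (labels c) = {1..n}" and "distinct (labels c)"
    using max_chain_interval_labels[OF chain] block_mins_empty block_mins_connected[OF graph connected]
    by simp_all
  then have "length (labels c) = n"
    using distinct_card by fastforce
  moreover have "c \<noteq> []"
    using chain unfolding max_chain_interval_def by blast
  ultimately show "length c = n + 1"
    using length_chain_labels[of "maxmin_label n" c] by (cases c) auto
qed

end

section \<open>Graphs that are not perfectly labeled\<close>

lemma edge_bond:
  assumes graph: "is_graph n G" and edge: "(u, v) \<in> G"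
  shows "{(u, v)} \<in> NC n G" and "conn {(u, v)} = Id \<union> {u, v} \<times> {u, v}"
    and "block_mins n {(u, v)} = {1..n+1} - {v}" and "maxmin_label n {} {(u, v)} = v - 1"
proof -
  have uv: "u < v" "u \<in> {1..n+1}" "v \<in> {1..n+1}"
    using graph edge unfolding is_graph_def by auto
  interpret block_merge n G "{}" u v
    by unfold_locales (use graph empty_bond uv edge in \<open>auto simp: block_mins_empty\<close>)
  have "merge G {} u v = G \<inter> (Id \<union> {u, v} \<times> {u, v})"
    unfolding merge_def by simp
  also have "\<dots> = {(u, v)}"
    using edge uv(1) by (auto dest: graph_edge_less[OF graph])
  finally have merge: "merge G {} u v = {(u, v)}" .
  show conn: "conn {(u, v)} = Id \<union> {u, v} \<times> {u, v}"
    using conn_merge unfolding merge by simp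
  show "{(u, v)} \<in> NC n G"
    using merge_bond noncrossing_rel_single_block NC_iff[OF graph] conn unfolding merge by metis
  show "block_mins n {(u, v)} = {1..n+1} - {v}"
    using block_mins_merge uv unfolding merge by (simp add: block_mins_empty max_def)
  show "maxmin_label n {} {(u, v)} = v - 1"
    using maxmin_label_merge uv unfolding merge by (simp add: max_def)
qed

lemma cherry_bond:
  assumes graph: "is_graph n G" and ik: "(i, k) \<in> G" and jk: "(j, k) \<in> G" and ij: "(i, j) \<notin> G"
    and "i < j" and "j < k" and u: "u \<in> {i, j}"
  shows "{(i, k), (j, k)} \<in> NC n G" and "maxmin_label n {(u, k)} {(i, k), (j, k)} = j - 1"
proof -
  have uk: "(u, k) \<in> G"
    using u ik jk by blast
  note single = edge_bond[OF graph uk]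
  have range: "i \<in> {1..n+1}" "j \<in> {1..n+1}"
    using graph ik jk unfolding is_graph_def by auto
  interpret block_merge n G "{(u, k)}" i j
  proof
    show "{(u, k)} = G \<inter> conn {(u, k)}"
      using single(1) NC_iff[OF graph] by blast
    show "i \<in> block_mins n {(u, k)}" and "j \<in> block_mins n {(u, k)}"
      using single(3) range \<open>i < j\<close> \<open>j < k\<close> by auto
    show "\<exists>p\<in>conn {(u, k)} `` {i}. \<exists>q\<in>conn {(u, k)} `` {j}. (p, q) \<in> G \<or> (q, p) \<in> G"
      using u ik jk single(2) by auto
  qed (use graph \<open>i < j\<close> in auto)
  have S: "conn {(u, k)} `` {i, j} = {i, j, k}"
    using u single(2) by auto
  have "merge G {(u, k)} i j = G \<inter> (Id \<union> {i, j, k} \<times> {i, j, k})"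
    unfolding merge_def S single(2) using u by blast
  also have "\<dots> = {(i, k), (j, k)}"
    using ik jk ij \<open>i < j\<close> \<open>j < k\<close> by (auto dest: graph_edge_less[OF graph])
  finally have merge: "merge G {(u, k)} i j = {(i, k), (j, k)}" .
  have "conn {(i, k), (j, k)} = Id \<union> {i, j, k} \<times> {i, j, k}"
    using conn_merge unfolding merge S single(2) using u by blast
  then show "{(i, k), (j, k)} \<in> NC n G"
    using merge_bond noncrossing_rel_single_block NC_iff[OF graph] unfolding merge by metis
  show "maxmin_label n {(u, k)} {(i, k), (j, k)} = j - 1"
    using maxmin_label_merge \<open>i < j\<close> unfolding merge by simp
qed

lemma not_EL_labeling_if_not_perfectly_labeled:
  assumes graph: "is_graph n G" and "\<not> perfectly_labeled G"
  shows "\<not> EL_labeling (NC n G) (maxmin_label n)"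
proof
  assume EL: "EL_labeling (NC n G) (maxmin_label n)"
  obtain i j k where ik: "(i, k) \<in> G" and jk: "(j, k) \<in> G" and ij: "(i, j) \<notin> G"
    and "i < j" and "j < k"
    using assms(2) unfolding perfectly_labeled_def by blast
  let ?H = "{(i, k), (j, k)}"
  note cherry = cherry_bond[OF graph ik jk ij \<open>i < j\<close> \<open>j < k\<close>]
  obtain c where chain: "max_chain_interval (NC n G) {} ?H c"
    and sorted: "sorted_wrt (<) (chain_labels (maxmin_label n) c)"
    using ex1_implies_ex[OF EL[unfolded EL_labeling_def, rule_format,
          OF empty_in_NC[OF graph] cherry(1) empty_subsetI, THEN conjunct1]]
    by blast
  obtain w c' where c: "c = {} # w # c'" and cover: "covers (NC n G) {} w"
    and tail: "max_chain_interval (NC n G) w ?H (w # c')"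
    using max_chain_interval_distinct_ends[OF chain] by blast
  have "w \<noteq> ?H"
    using cover edge_bond(1)[OF graph ik] \<open>i < j\<close> unfolding covers_def by blast
  moreover have "w \<noteq> {}" and "w \<subseteq> ?H"
    using cover max_chain_interval_le[OF tail] unfolding covers_def by auto
  ultimately obtain u where u: "u \<in> {i, j}" and w: "w = {(u, k)}"
    by blast
  obtain w' c'' where c': "c' = w' # c''" and cover': "covers (NC n G) w w'"
    and tail': "max_chain_interval (NC n G) w' ?H (w' # c'')"
    using max_chain_interval_distinct_ends[OF tail \<open>w \<noteq> ?H\<close>] by blast
  have "w \<subset> w'"
    using cover' unfolding covers_def by blast
  moreover have "w' \<subseteq> ?H"
    using max_chain_interval_le[OF tail'] .
  ultimately have "w' = ?H"
    using w u by blast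
  then have "chain_labels (maxmin_label n) c = [k - 1, j - 1] @ chain_labels (maxmin_label n) (w' # c'')"
    using c c' w edge_bond(4)[OF graph] ik jk u cherry(2)[OF u] by auto
  then have "k - 1 < j - 1"
    using sorted by simp
  then show False
    using \<open>j < k\<close> by arith
qed

theorem proposition5p10:
  fixes n :: nat and G :: "(nat \<times> nat) set"
  assumes "is_graph n G" and "graph_connected n G" and "graded (NC n G)"
  shows "Sn_EL_labeling n (NC n G) (maxmin_label n) \<longleftrightarrow> perfectly_labeled G"
proof
  assume "Sn_EL_labeling n (NC n G) (maxmin_label n)"
  then show "perfectly_labeled G"
    using not_EL_labeling_if_not_perfectly_labeled[OF assms(1)] unfolding Sn_EL_labeling_def by blast
next
  assume "perfectly_labeled G"
  then interpret perfectly_labeled_graph n G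
    using assms(1) by unfold_locales
  show "Sn_EL_labeling n (NC n G) (maxmin_label n)"
    using Sn_EL_labeling_maxmin[OF assms(2)] .
qed

end
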